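(* Consider an instance of $k$-robust Steiner forest on an undirected graph $G=(V,E)$ with edge costs $c$, pair set $U\subseteq V\times V$, inflation $\lambda\ge1$ and integer $k\ge1$, a threshold $T\ge0$, and constants $\beta,\gamma$ with $2<\gamma\le\beta/2$. Run the following procedure: start with $S_r=S_f=W=\emptyset$; while there is a pair $(s,t)\in U$ with $d_{G/(S_r\cup S_f)}(s,t)>\beta\frac{T}{k}$, add $(s,t)$ to $S_r$; then, if $d_G(s,w)<\gamma\frac{T}{k}$ for some $w\in W$, add $(s,w)$ to $S_f$ for such a $w$, else add $s$ to $W$; then, if $d_G(t,w')<\gamma\frac Tk$ for some $w'\in W$, add $(t,w')$ to $S_f$ for such a $w'$, else add $t$ to $W$. Let $\Phi_T$ be the union of a Steiner forest connecting all pairs in $S_r$ of cost at most twice the minimum, together with shortest paths in $G$ connecting every pair in $S_f$. Let $\Phi^*$ and $T^*$ denote the first-stage cost and second-stage cost of an optimal solution of the $k$-robust instance. If $T\ge T^*$ then $c(\Phi_T)\le\frac{4\gamma}{\gamma-2}\cdot(\Phi^*+T^* )$.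
   Context: $d_G$ is the shortest-path distance in $G$ under edge costs $c$; for a set of vertex pairs $S$, $G/S$ is the graph obtained by identifying the two vertices of each pair in $S$. $k$-robust Steiner forest: a feasible solution is a first-stage edge set $E_0$ and, for every $D\subseteq U$ with $|D|=k$, an edge set $E_D$ such that $E_0\cup E_D$ connects every pair of $D$; its cost is $c(E_0)+\lambda\max_Dc(E_D)$, with first-stage cost $c(E_0)$ and second-stage cost $\max_Dc(E_D)$. *)

theory Defs
  imports "HOL-Library.Extended_Real"
begin

definition graph :: "'v set \<Rightarrow> 'v set set \<Rightarrow> bool" where
  "graph V E \<longleftrightarrow> finite V \<and> (\<forall>e\<in>E. \<exists>u v. e = {u, v} \<and> u \<in> V \<and> v \<in> V \<and> u \<noteq> v)"

text \<open>Walks in G/S: a step is either an edge of G (paying its cost) or a jump between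
  the two vertices of an identified pair of S (free, since the vertices are merged).\<close>

definition linked :: "('v \<times> 'v) set \<Rightarrow> 'v \<Rightarrow> 'v \<Rightarrow> bool" where
  "linked S a b \<longleftrightarrow> (a, b) \<in> S \<or> (b, a) \<in> S"

definition is_walk :: "'v set set \<Rightarrow> ('v \<times> 'v) set \<Rightarrow> 'v list \<Rightarrow> bool" where
  "is_walk E S xs \<longleftrightarrow> xs \<noteq> [] \<and> (\<forall>(a, b)\<in>set (zip xs (tl xs)). {a, b} \<in> E \<or> linked S a b)"

definition walk_cost :: "('v set \<Rightarrow> real) \<Rightarrow> ('v \<times> 'v) set \<Rightarrow> 'v list \<Rightarrow> real" where
  "walk_cost c S xs = sum_list (map (\<lambda>(a, b). if linked S a b then 0 else c {a, b}) (zip xs (tl xs)))"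

text \<open>Shortest-path distance in G/S (infinite if no walk exists); dist E c {} is d_G.\<close>
definition dist :: "'v set set \<Rightarrow> ('v set \<Rightarrow> real) \<Rightarrow> ('v \<times> 'v) set \<Rightarrow> 'v \<Rightarrow> 'v \<Rightarrow> ereal" where
  "dist E c S s t = (INF xs\<in>{xs. is_walk E S xs \<and> hd xs = s \<and> last xs = t}. ereal (walk_cost c S xs))"

definition path_edges :: "'v list \<Rightarrow> 'v set set" where
  "path_edges xs = set (map (\<lambda>(a, b). {a, b}) (zip xs (tl xs)))"

definition shortest_path :: "'v set set \<Rightarrow> ('v set \<Rightarrow> real) \<Rightarrow> 'v \<Rightarrow> 'v \<Rightarrow> 'v list \<Rightarrow> bool" where
  "shortest_path E c a b xs \<longleftrightarrow> is_walk E {} xs \<and> distinct xs \<and> hd xs = a \<and> last xs = b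
     \<and> ereal (walk_cost c {} xs) = dist E c {} a b"

definition connects :: "'v set set \<Rightarrow> 'v \<Rightarrow> 'v \<Rightarrow> bool" where
  "connects F s t \<longleftrightarrow> (s, t) \<in> {(a, b). {a, b} \<in> F}\<^sup>*"

definition steiner_forest :: "'v set set \<Rightarrow> ('v \<times> 'v) set \<Rightarrow> 'v set set \<Rightarrow> bool" where
  "steiner_forest E P F \<longleftrightarrow> F \<subseteq> E \<and> (\<forall>(s, t)\<in>P. connects F s t)"

definition steiner_opt :: "'v set set \<Rightarrow> ('v set \<Rightarrow> real) \<Rightarrow> ('v \<times> 'v) set \<Rightarrow> real" where
  "steiner_opt E c P = Inf {sum c F | F. steiner_forest E P F}"

definition scenarios :: "('v \<times> 'v) set \<Rightarrow> nat \<Rightarrow> ('v \<times> 'v) set set" where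
  "scenarios U k = {D. D \<subseteq> U \<and> card D = k}"

definition robust_feasible ::
  "'v set set \<Rightarrow> ('v \<times> 'v) set \<Rightarrow> nat \<Rightarrow> 'v set set \<Rightarrow> (('v \<times> 'v) set \<Rightarrow> 'v set set) \<Rightarrow> bool" where
  "robust_feasible E U k E0 ED \<longleftrightarrow> E0 \<subseteq> E \<and>
     (\<forall>D\<in>scenarios U k. ED D \<subseteq> E \<and> (\<forall>(s, t)\<in>D. connects (E0 \<union> ED D) s t))"

definition second_stage ::
  "('v set \<Rightarrow> real) \<Rightarrow> ('v \<times> 'v) set \<Rightarrow> nat \<Rightarrow> (('v \<times> 'v) set \<Rightarrow> 'v set set) \<Rightarrow> real" where
  "second_stage c U k ED = Max ((\<lambda>D. sum c (ED D)) ` scenarios U k)"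

definition robust_cost ::
  "('v set \<Rightarrow> real) \<Rightarrow> ('v \<times> 'v) set \<Rightarrow> nat \<Rightarrow> real \<Rightarrow> 'v set set \<Rightarrow> (('v \<times> 'v) set \<Rightarrow> 'v set set) \<Rightarrow> real" where
  "robust_cost c U k lam E0 ED = sum c E0 + lam * second_stage c U k ED"

definition robust_optimal ::
  "'v set set \<Rightarrow> ('v set \<Rightarrow> real) \<Rightarrow> ('v \<times> 'v) set \<Rightarrow> nat \<Rightarrow> real \<Rightarrow> 'v set set \<Rightarrow> (('v \<times> 'v) set \<Rightarrow> 'v set set) \<Rightarrow> bool" where
  "robust_optimal E c U k lam E0 ED \<longleftrightarrow> robust_feasible E U k E0 ED \<and>
     (\<forall>E0' ED'. robust_feasible E U k E0' ED' \<longrightarrow> robust_cost c U k lam E0 ED \<le> robust_cost c U k lam E0' ED')"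

definition proc_terminal ::
  "'v set set \<Rightarrow> ('v set \<Rightarrow> real) \<Rightarrow> real \<Rightarrow> 'v \<Rightarrow> ('v \<times> 'v) set \<times> 'v set \<Rightarrow> ('v \<times> 'v) set \<times> 'v set \<Rightarrow> bool" where
  "proc_terminal E c r x st st' \<longleftrightarrow>
     (\<exists>w\<in>snd st. dist E c {} x w < ereal r \<and> st' = (insert (x, w) (fst st), snd st))
   \<or> ((\<forall>w\<in>snd st. \<not> dist E c {} x w < ereal r) \<and> st' = (fst st, insert x (snd st)))"

definition violated :: "'v set set \<Rightarrow> ('v set \<Rightarrow> real) \<Rightarrow> real \<Rightarrow> ('v \<times> 'v) set \<Rightarrow> ('v \<times> 'v) set \<Rightarrow> 'v \<Rightarrow> 'v \<Rightarrow> bool" where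
  "violated E c b Sr Sf s t \<longleftrightarrow> dist E c (Sr \<union> Sf) s t > ereal b"

definition proc_step ::
  "'v set set \<Rightarrow> ('v set \<Rightarrow> real) \<Rightarrow> ('v \<times> 'v) set \<Rightarrow> real \<Rightarrow> real \<Rightarrow>
   ('v \<times> 'v) set \<times> ('v \<times> 'v) set \<times> 'v set \<Rightarrow> ('v \<times> 'v) set \<times> ('v \<times> 'v) set \<times> 'v set \<Rightarrow> bool" where
  "proc_step E c U b r st st' \<longleftrightarrow>
     (case st of (Sr, Sf, W) \<Rightarrow> case st' of (Sr', Sf', W') \<Rightarrow>
       (\<exists>(s, t)\<in>U. violated E c b Sr Sf s t \<and> Sr' = insert (s, t) Sr \<and>
          (\<exists>mid. proc_terminal E c r s (Sf, W) mid \<and> proc_terminal E c r t mid (Sf', W'))))"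

definition proc_final ::
  "'v set set \<Rightarrow> ('v set \<Rightarrow> real) \<Rightarrow> ('v \<times> 'v) set \<Rightarrow> real \<Rightarrow> real \<Rightarrow>
   ('v \<times> 'v) set \<times> ('v \<times> 'v) set \<times> 'v set \<Rightarrow> bool" where
  "proc_final E c U b r st \<longleftrightarrow> (proc_step E c U b r)\<^sup>*\<^sup>* ({}, {}, {}) st \<and>
     (case st of (Sr, Sf, W) \<Rightarrow> \<not> (\<exists>(s, t)\<in>U. violated E c b Sr Sf s t))"

end

theory Submission
  imports Defs
begin

text \<open>The output is a Steiner forest for \<open>S\<^sub>r\<close> of cost at most twice optimal together with one
  shortest path per pair of \<open>S\<^sub>f\<close>, each shorter than \<open>r = \<gamma>T/k\<close>. Covering \<open>S\<^sub>r\<close> by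
  \<open>\<lceil>|S\<^sub>r|/k\<rceil>\<close> scenarios shows that an optimal Steiner forest for \<open>S\<^sub>r\<close> costs at most
  \<open>\<Phi>\<^sup>* + T\<^sup>* + |S\<^sub>r| T/k\<close>. In the other direction, the points of \<open>W\<close> are pairwise at least
  \<open>r\<close> apart and each is an endpoint of a pair of \<open>S\<^sub>r\<close> at distance more than \<open>\<beta>T/k \<ge> 2r\<close>;
  the balls of radius \<open>r/2\<close> around them share no edge length, and each is crossed to depth
  \<open>r/2\<close> by the edges connecting its pair in a scenario, so \<open>|W| r/2 \<le> \<Phi>\<^sup>* + T\<^sup>* + |W| T/k\<close>.
  Finally, every pair of \<open>S\<^sub>r\<close> puts two terminals into \<open>S\<^sub>f \<union> W\<close>, and \<open>|S\<^sub>r| \<le> |W|\<close>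
  because every pair either adds a point to \<open>W\<close> or has both terminals attached to points of \<open>W\<close>
  that were not yet identified in \<open>G/(S\<^sub>r \<union> S\<^sub>f)\<close>, and so merges two of its classes
  (otherwise \<open>s\<close> and \<open>t\<close> would be closer than \<open>2r\<close> there). Combining the three estimates
  gives the ratio \<open>4\<gamma>/(\<gamma> - 2)\<close>.\<close>

lemma ereal_add_less_double: "a < ereal h \<Longrightarrow> b < ereal h \<Longrightarrow> a + b < ereal (2 * h)"
  by (cases a; cases b) simp_all

lemma rtrancl_leave_start:
  assumes "(a, z) \<in> R\<^sup>*" "a \<noteq> z"
  shows "\<exists>a'. (a, a') \<in> R \<and> (a', z) \<in> {(u, v). (u, v) \<in> R \<and> u \<noteq> a \<and> v \<noteq> a}\<^sup>*"
  using assms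
proof (induction rule: rtrancl_induct)
  case (step y z')
  show ?case
  proof (cases "y = a")
    case True
    then show ?thesis using step.hyps(2) by auto
  next
    case False
    with step obtain a' where "(a, a') \<in> R" "(a', y) \<in> {(u, v). (u, v) \<in> R \<and> u \<noteq> a \<and> v \<noteq> a}\<^sup>*"
      by blast
    moreover have "(y, z') \<in> {(u, v). (u, v) \<in> R \<and> u \<noteq> a \<and> v \<noteq> a}"
      using False step.hyps(2) step.prems by auto
    ultimately show ?thesis by (meson rtrancl_into_rtrancl)
  qed
qed simp

lemma sum_Un_le_nonneg:
  fixes f :: "'a \<Rightarrow> real"
  assumes "finite A" "finite B" "\<forall>x\<in>A \<inter> B. 0 \<le> f x"
  shows "sum f (A \<union> B) \<le> sum f A + sum f B"
  using sum_Un[OF assms(1,2), of f] sum_nonneg[of "A \<inter> B" f] assms(3) by simp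

lemma sum_UN_le_nonneg:
  fixes f :: "'a \<Rightarrow> real"
  assumes "finite I" "\<forall>i\<in>I. finite (g i)" "\<forall>i\<in>I. \<forall>x\<in>g i. 0 \<le> f x"
  shows "sum f (\<Union>i\<in>I. g i) \<le> (\<Sum>i\<in>I. sum f (g i))"
  using assms
proof (induction I rule: finite_induct)
  case (insert i I)
  then have "sum f (g i \<union> (\<Union>j\<in>I. g j)) \<le> sum f (g i) + sum f (\<Union>j\<in>I. g j)"
    by (intro sum_Un_le_nonneg) auto
  then show ?case using insert by simp
qed simp

lemma sum_set_le_sum_list:
  fixes f :: "'a \<Rightarrow> real"
  shows "\<forall>x\<in>set xs. 0 \<le> f x \<Longrightarrow> sum f (set xs) \<le> sum_list (map f xs)"
proof (induction xs)
  case (Cons a xs)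
  then have "sum f (set (a # xs)) \<le> f a + sum f (set xs)" using Cons.prems by (simp add: sum.insert_if)
  then show ?case using Cons by simp
qed simp

lemma graph_edge: "graph V E \<Longrightarrow> e \<in> E \<Longrightarrow> \<exists>u v. e = {u, v} \<and> u \<noteq> v"
  unfolding graph_def by fast

lemma graph_finite_edges: "graph V E \<Longrightarrow> finite E"
proof -
  assume g: "graph V E"
  then have "E \<subseteq> Pow V" unfolding graph_def by fastforce
  moreover have "finite V" using g unfolding graph_def by simp
  ultimately show "finite E" by (meson finite_Pow_iff finite_subset)
qed

lemma connects_mono: "connects F s t \<Longrightarrow> F \<subseteq> F' \<Longrightarrow> connects F' s t"
  unfolding connects_def by (erule rtrancl_mono[THEN subsetD, rotated]) auto

lemma connects_sym: "connects F s t \<Longrightarrow> connects F t s"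
proof -
  have "{(a, b). {a, b} \<in> F}\<inverse> = {(a, b). {a, b} \<in> F}" by (auto simp: insert_commute)
  then show "connects F s t \<Longrightarrow> connects F t s"
    unfolding connects_def by (metis rtrancl_converseI)
qed

section \<open>Walks in contracted graphs\<close>

definition step_cost :: "('v set \<Rightarrow> real) \<Rightarrow> ('v \<times> 'v) set \<Rightarrow> 'v \<Rightarrow> 'v \<Rightarrow> real" where
  "step_cost c S a b = (if linked S a b then 0 else c {a, b})"

inductive has_walk :: "'v set set \<Rightarrow> ('v set \<Rightarrow> real) \<Rightarrow> ('v \<times> 'v) set \<Rightarrow> 'v \<Rightarrow> 'v \<Rightarrow> real \<Rightarrow> bool"
  for E c S where
  has_walk_refl: "has_walk E c S a a 0"
| has_walk_step: "has_walk E c S a b C \<Longrightarrow> {b, b'} \<in> E \<or> linked S b b' \<Longrightarrow>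
     has_walk E c S a b' (C + step_cost c S b b')"

lemma linked_sym: "linked S a b \<longleftrightarrow> linked S b a"
  by (auto simp: linked_def)

lemma step_cost_sym: "step_cost c S a b = step_cost c S b a"
  by (simp add: step_cost_def linked_sym insert_commute)

lemma zip_tl_snoc: "xs \<noteq> [] \<Longrightarrow> zip (xs @ [y]) (tl (xs @ [y])) = zip xs (tl xs) @ [(last xs, y)]"
  by (induction xs) (auto simp: neq_Nil_conv)

lemma walk_cost_snoc:
  "xs \<noteq> [] \<Longrightarrow> walk_cost c S (xs @ [y]) = walk_cost c S xs + step_cost c S (last xs) y"
  by (simp add: walk_cost_def step_cost_def zip_tl_snoc del: tl_append2)

lemma is_walk_snoc:
  "xs \<noteq> [] \<Longrightarrow> is_walk E S (xs @ [y]) \<longleftrightarrow> is_walk E S xs \<and> ({last xs, y} \<in> E \<or> linked S (last xs) y)"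
  by (auto simp: is_walk_def zip_tl_snoc simp del: tl_append2)

lemma is_walk_has_walk: "is_walk E S xs \<Longrightarrow> has_walk E c S (hd xs) (last xs) (walk_cost c S xs)"
proof (induction xs rule: rev_induct)
  case (snoc y xs)
  show ?case
  proof (cases "xs = []")
    case True
    then show ?thesis by (simp add: walk_cost_def has_walk_refl)
  next
    case False
    with snoc have "has_walk E c S (hd xs) (last xs) (walk_cost c S xs)"
      and "{last xs, y} \<in> E \<or> linked S (last xs) y"
      by (simp_all add: is_walk_snoc)
    from has_walk_step[OF this] False show ?thesis by (simp add: walk_cost_snoc)
  qed
qed (simp add: is_walk_def)

lemma has_walk_is_walk:
  "has_walk E c S a b C \<Longrightarrow> \<exists>xs. is_walk E S xs \<and> hd xs = a \<and> last xs = b \<and> walk_cost c S xs = C"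
proof (induction rule: has_walk.induct)
  case (has_walk_refl a)
  show ?case by (intro exI[of _ "[a]"]) (simp add: is_walk_def walk_cost_def)
next
  case (has_walk_step a b C b')
  then obtain xs where "is_walk E S xs" "hd xs = a" "last xs = b" "walk_cost c S xs = C"
    by blast
  moreover have "xs \<noteq> []" using \<open>is_walk E S xs\<close> by (simp add: is_walk_def)
  ultimately show ?case
    using has_walk_step.hyps(2) by (intro exI[of _ "xs @ [b']"]) (simp add: is_walk_snoc walk_cost_snoc)
qed

lemma dist_eq_INF_has_walk: "dist E c S a b = (INF C\<in>{C. has_walk E c S a b C}. ereal C)"
proof -
  have "walk_cost c S ` {xs. is_walk E S xs \<and> hd xs = a \<and> last xs = b} = {C. has_walk E c S a b C}"
    using is_walk_has_walk has_walk_is_walk by fastforce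
  then show ?thesis unfolding dist_def by (metis image_image)
qed

lemma has_walk_trans: "has_walk E c S b d C2 \<Longrightarrow> has_walk E c S a b C1 \<Longrightarrow> has_walk E c S a d (C1 + C2)"
  by (induction rule: has_walk.induct) (auto simp: add.assoc dest: has_walk_step)

lemma has_walk_single: "{a, b} \<in> E \<or> linked S a b \<Longrightarrow> has_walk E c S a b (step_cost c S a b)"
  using has_walk_step[OF has_walk_refl] by simp

lemma has_walk_rev: "has_walk E c S a b C \<Longrightarrow> has_walk E c S b a C"
proof (induction rule: has_walk.induct)
  case (has_walk_step a b C b')
  then have "{b', b} \<in> E \<or> linked S b' b" by (auto simp: insert_commute linked_sym)
  from has_walk_trans[OF has_walk_step.IH has_walk_single[OF this]] show ?case
    by (simp add: step_cost_sym add.commute)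
qed (rule has_walk_refl)

context
  fixes E :: "'v set set" and c :: "'v set \<Rightarrow> real"
  assumes cost_nonneg: "\<forall>e\<in>E. 0 \<le> c e"
begin

lemma step_cost_nonneg: "{a, b} \<in> E \<or> linked S a b \<Longrightarrow> 0 \<le> step_cost c S a b"
  using cost_nonneg by (auto simp: step_cost_def)

lemma has_walk_nonneg: "has_walk E c S a b C \<Longrightarrow> 0 \<le> C"
  by (induction rule: has_walk.induct) (use step_cost_nonneg in force)+

lemma has_walk_contract: "has_walk E c {} a b C \<Longrightarrow> \<exists>C'\<le>C. has_walk E c S a b C'"
proof (induction rule: has_walk.induct)
  case (has_walk_refl a)
  show ?case by (intro exI[of _ 0]) (simp add: has_walk.has_walk_refl)
next
  case (has_walk_step a b C b')
  then obtain C' where "C' \<le> C" "has_walk E c S a b C'" by blast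
  moreover have "{b, b'} \<in> E" using has_walk_step.hyps(2) by (simp add: linked_def)
  moreover from this have "step_cost c S b b' \<le> step_cost c {} b b'"
    using cost_nonneg by (simp add: step_cost_def linked_def)
  ultimately show ?case by (blast intro: has_walk.has_walk_step add_mono)
qed

lemma dist_nonneg: "0 \<le> dist E c S a b"
  unfolding dist_eq_INF_has_walk using has_walk_nonneg by (auto intro!: INF_greatest)

lemma dist_le: "has_walk E c S a b C \<Longrightarrow> dist E c S a b \<le> ereal C"
  unfolding dist_eq_INF_has_walk by (auto intro!: INF_lower2)

lemma dist_real: "dist E c S a b < ereal r \<Longrightarrow> dist E c S a b = ereal (real_of_ereal (dist E c S a b))"
  using dist_nonneg[of S a b] by (cases "dist E c S a b") auto

lemma dist_self: "dist E c S a a = 0"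
  using dist_le[OF has_walk_refl, of S a] dist_nonneg[of S a a] by (simp add: zero_ereal_def)

lemma dist_commute: "dist E c S a b = dist E c S b a"
proof -
  have "{C. has_walk E c S a b C} = {C. has_walk E c S b a C}" by (auto intro: has_walk_rev)
  then show ?thesis unfolding dist_eq_INF_has_walk by simp
qed

lemma dist_triangle: "dist E c S a d \<le> dist E c S a b + dist E c S b d"
proof -
  let ?A = "{C. has_walk E c S a b C}" and ?B = "{C. has_walk E c S b d C}"
  have nA: "(INF i\<in>?A. ereal i) \<noteq> -\<infinity>" and nB: "(INF j\<in>?B. ereal j) \<noteq> -\<infinity>"
    using dist_nonneg[of S a b] dist_nonneg[of S b d] unfolding dist_eq_INF_has_walk by auto
  show ?thesis
  proof (cases "?A = {} \<or> ?B = {}")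
    case True
    then have "(INF i\<in>?A. ereal i) = \<infinity> \<or> (INF j\<in>?B. ereal j) = \<infinity>"
      by (auto simp: top_ereal_def)
    then have "dist E c S a b + dist E c S b d = \<infinity>"
      using nA nB unfolding dist_eq_INF_has_walk by auto
    then show ?thesis by (metis ereal_less_eq(1))
  next
    case False
    have "dist E c S a d \<le> (INF i\<in>?A. (INF j\<in>?B. ereal i + ereal j))"
      by (intro INF_greatest) (auto intro: dist_le has_walk_trans)
    also have "\<dots> = (INF i\<in>?A. ereal i + (INF j\<in>?B. ereal j))"
      using False has_walk_nonneg by (intro INF_cong refl INF_ereal_add_right) auto
    also have "\<dots> = (INF i\<in>?A. ereal i) + (INF j\<in>?B. ereal j)"
      using False has_walk_nonneg nB by (intro INF_ereal_add_left) auto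
    finally show ?thesis unfolding dist_eq_INF_has_walk .
  qed
qed

lemma dist_contract_le: "dist E c S a b \<le> dist E c {} a b"
  unfolding dist_eq_INF_has_walk
  by (rule INF_greatest) (use has_walk_contract in \<open>force intro: INF_lower2\<close>)

lemma dist_edge: "{a, b} \<in> E \<Longrightarrow> dist E c S a b \<le> ereal (c {a, b})"
  using dist_le[OF has_walk_single[of a b E S c]] cost_nonneg
  by (auto simp: step_cost_def split: if_splits intro: order_trans)

end

definition identified :: "('v \<times> 'v) set \<Rightarrow> ('v \<times> 'v) set" where
  "identified S = (S \<union> S\<inverse>)\<^sup>*"

lemma identified_refl: "(a, a) \<in> identified S"
  by (simp add: identified_def)

lemma identified_pair: "(a, b) \<in> S \<Longrightarrow> (a, b) \<in> identified S \<and> (b, a) \<in> identified S"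
  by (auto simp: identified_def)

lemma identified_trans: "(a, b) \<in> identified S \<Longrightarrow> (b, d) \<in> identified S \<Longrightarrow> (a, d) \<in> identified S"
  unfolding identified_def by (rule rtrancl_trans)

lemma identified_sym: "(a, b) \<in> identified S \<Longrightarrow> (b, a) \<in> identified S"
proof -
  have "(S \<union> S\<inverse>)\<inverse> = S \<union> S\<inverse>" by auto
  then show "(a, b) \<in> identified S \<Longrightarrow> (b, a) \<in> identified S"
    unfolding identified_def by (metis rtrancl_converseI)
qed

lemma identified_mono: "S \<subseteq> S' \<Longrightarrow> identified S \<subseteq> identified S'"
  unfolding identified_def by (rule rtrancl_mono) auto

lemma dist_identified:
  assumes "\<forall>e\<in>E. 0 \<le> c e" and "(a, b) \<in> identified S"
  shows "dist E c S a b = 0"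
  using assms(2) unfolding identified_def
proof (induction rule: rtrancl_induct)
  case base
  show ?case by (rule dist_self[OF assms(1)])
next
  case (step y z)
  then have "linked S y z" by (auto simp: linked_def)
  then have "dist E c S y z \<le> 0"
    using dist_le[OF assms(1) has_walk_single[of y z E S c]] by (simp add: step_cost_def zero_ereal_def)
  then have "dist E c S a z \<le> 0" using dist_triangle[OF assms(1), of S a z y] step.IH by simp
  then show ?case using dist_nonneg[OF assms(1), of S a z] by simp
qed

lemma path_edges_subset: "is_walk E {} xs \<Longrightarrow> path_edges xs \<subseteq> E"
  unfolding is_walk_def linked_def path_edges_def by auto

lemma sum_path_edges_le_walk_cost:
  assumes "is_walk E {} xs" "\<forall>e\<in>E. 0 \<le> c e"
  shows "sum c (path_edges xs) \<le> walk_cost c {} xs"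
proof -
  have "walk_cost c {} xs = sum_list (map c (map (\<lambda>(a, b). {a, b}) (zip xs (tl xs))))"
    unfolding walk_cost_def linked_def by (simp add: case_prod_unfold comp_def)
  moreover have "sum c (path_edges xs) \<le> sum_list (map c (map (\<lambda>(a, b). {a, b}) (zip xs (tl xs))))"
    unfolding path_edges_def
    using path_edges_subset[OF assms(1)] assms(2) by (intro sum_set_le_sum_list) (auto simp: path_edges_def)
  ultimately show ?thesis by simp
qed

section \<open>Balls around separated points\<close>

definition separated :: "'v set set \<Rightarrow> ('v set \<Rightarrow> real) \<Rightarrow> real \<Rightarrow> 'v set \<Rightarrow> bool" where
  "separated E c r W \<longleftrightarrow> (\<forall>w\<in>W. \<forall>w'\<in>W. w \<noteq> w' \<longrightarrow> ereal r \<le> dist E c {} w w')"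

definition capped_dist :: "'v set set \<Rightarrow> ('v set \<Rightarrow> real) \<Rightarrow> 'v \<Rightarrow> real \<Rightarrow> 'v \<Rightarrow> real" where
  "capped_dist E c x h z = (if dist E c {} x z < ereal h then real_of_ereal (dist E c {} x z) else h)"

text \<open>The part of the edge \<open>e\<close> lying inside the open ball of radius \<open>h\<close> around \<open>x\<close>.
  Balls of radius \<open>h\<close> around \<open>2h\<close>-separated centres share no edge length, while an edge set
  joining \<open>x\<close> to a point outside its ball contains length \<open>h\<close> of it.\<close>

definition ball_share :: "'v set set \<Rightarrow> ('v set \<Rightarrow> real) \<Rightarrow> 'v \<Rightarrow> real \<Rightarrow> 'v set \<Rightarrow> real" where
  "ball_share E c x h e = min (c e) (\<Sum>z\<in>e. h - capped_dist E c x h z)"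

lemma capped_dist_far: "ereal h \<le> dist E c {} x z \<Longrightarrow> capped_dist E c x h z = h"
  by (simp add: capped_dist_def leD)

context
  fixes V :: "'v set" and E :: "'v set set" and c :: "'v set \<Rightarrow> real"
  assumes graph: "graph V E" and cost_nonneg: "\<forall>e\<in>E. 0 \<le> c e"
begin

lemma capped_dist_bounds: "0 \<le> h \<Longrightarrow> 0 \<le> capped_dist E c x h z \<and> capped_dist E c x h z \<le> h"
proof (cases "dist E c {} x z < ereal h")
  case True
  then have "0 \<le> dist E c {} x z" "dist E c {} x z = ereal (capped_dist E c x h z)"
    using dist_nonneg[OF cost_nonneg] dist_real[OF cost_nonneg True] by (auto simp: capped_dist_def)
  then show ?thesis using True by auto
qed (simp add: capped_dist_def)

lemma capped_dist_self: "0 \<le> h \<Longrightarrow> capped_dist E c x h x = 0"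
  using dist_self[OF cost_nonneg, of "{}" x] by (auto simp: capped_dist_def zero_ereal_def)

lemma capped_dist_edge:
  assumes "{u, v} \<in> E" "0 \<le> h"
  shows "capped_dist E c x h v \<le> capped_dist E c x h u + c {u, v}"
proof (cases "dist E c {} x u < ereal h")
  case False
  then have "capped_dist E c x h u = h" by (simp add: capped_dist_def)
  then show ?thesis using cost_nonneg assms(1) capped_dist_bounds[OF assms(2), of x v] by force
next
  case True
  define du where "du = real_of_ereal (dist E c {} x u)"
  have du: "dist E c {} x u = ereal du" "capped_dist E c x h u = du"
    using dist_real[OF cost_nonneg True] True by (simp_all add: du_def capped_dist_def)
  have "dist E c {} x v \<le> dist E c {} x u + dist E c {} u v"
    by (rule dist_triangle[OF cost_nonneg])
  also have "\<dots> \<le> ereal du + ereal (c {u, v})"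
    using du(1) dist_edge[OF cost_nonneg assms(1), of "{}"] by (metis add_left_mono)
  finally have dv: "dist E c {} x v \<le> ereal (du + c {u, v})" by simp
  show ?thesis
  proof (cases "dist E c {} x v < ereal h")
    case True
    then have "dist E c {} x v = ereal (capped_dist E c x h v)"
      using dist_real[OF cost_nonneg True] by (simp add: capped_dist_def)
    then show ?thesis using dv du by simp
  next
    case False
    then have "ereal h \<le> ereal (du + c {u, v})" using dv by (meson not_le order_trans)
    then show ?thesis using False du by (simp add: capped_dist_def)
  qed
qed

lemma ball_share_nonneg: "e \<in> E \<Longrightarrow> 0 \<le> h \<Longrightarrow> 0 \<le> ball_share E c x h e"
  unfolding ball_share_def using cost_nonneg capped_dist_bounds by (auto intro!: sum_nonneg)

lemma ball_share_edge:
  assumes "{u, v} \<in> E" "0 \<le> h"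
  shows "capped_dist E c x h v - capped_dist E c x h u \<le> ball_share E c x h {u, v}"
proof -
  have "u \<noteq> v" using graph_edge[OF graph assms(1)] by (metis doubleton_eq_iff insert_absorb2)
  moreover have "capped_dist E c x h v - capped_dist E c x h u \<le> c {u, v}"
    using capped_dist_edge[OF assms, of x] by linarith
  moreover have "capped_dist E c x h v - capped_dist E c x h u
      \<le> (h - capped_dist E c x h u) + (h - capped_dist E c x h v)"
    using capped_dist_bounds[OF assms(2), of x v] by simp
  ultimately show ?thesis unfolding ball_share_def by simp
qed

text \<open>Induction on \<open>F\<close>: after the first step out of \<open>a\<close>, the edges at \<open>a\<close> are no longer needed.\<close>

lemma capped_dist_diff_le_ball_share:
  assumes "finite F" "F \<subseteq> E" "0 \<le> h" "(a, z) \<in> {(p, q). {p, q} \<in> F}\<^sup>*"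
  shows "capped_dist E c x h z - capped_dist E c x h a \<le> (\<Sum>e\<in>F. ball_share E c x h e)"
  using assms(1,2,4)
proof (induction F arbitrary: a rule: finite_psubset_induct)
  case (psubset F)
  show ?case
  proof (cases "a = z")
    case True
    then show ?thesis using psubset.prems ball_share_nonneg assms(3) by (auto intro!: sum_nonneg)
  next
    case False
    define F' where "F' = {e \<in> F. a \<notin> e}"
    obtain a' where a': "{a, a'} \<in> F"
      "(a', z) \<in> {(u, v). (u, v) \<in> {(p, q). {p, q} \<in> F} \<and> u \<noteq> a \<and> v \<noteq> a}\<^sup>*"
      using rtrancl_leave_start[OF psubset.prems(2) False] by blast
    have "{(u, v). (u, v) \<in> {(p, q). {p, q} \<in> F} \<and> u \<noteq> a \<and> v \<noteq> a} \<subseteq> {(p, q). {p, q} \<in> F'}"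
      unfolding F'_def by auto
    then have "(a', z) \<in> {(p, q). {p, q} \<in> F'}\<^sup>*" using rtrancl_mono a'(2) by blast
    moreover have F'F: "F' \<subset> F" using a'(1) unfolding F'_def by auto
    ultimately have "capped_dist E c x h z - capped_dist E c x h a' \<le> (\<Sum>e\<in>F'. ball_share E c x h e)"
      using psubset.IH psubset.prems(1) by blast
    moreover have "(\<Sum>e\<in>F. ball_share E c x h e)
        = (\<Sum>e\<in>F'. ball_share E c x h e) + (\<Sum>e\<in>F - F'. ball_share E c x h e)"
      using F'F psubset.hyps by (metis add.commute psubset_imp_subset sum.subset_diff)
    moreover have "ball_share E c x h {a, a'} \<le> (\<Sum>e\<in>F - F'. ball_share E c x h e)"
      using a'(1) psubset.hyps psubset.prems(1) ball_share_nonneg[OF _ assms(3)] unfolding F'_def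
      by (intro member_le_sum) auto
    moreover have "capped_dist E c x h a' - capped_dist E c x h a \<le> ball_share E c x h {a, a'}"
      using ball_share_edge a'(1) psubset.prems(1) assms(3) by blast
    ultimately show ?thesis by linarith
  qed
qed

lemma separated_close_unique:
  assumes "separated E c (2 * h) X" "x \<in> X" "x' \<in> X"
    and "dist E c {} x w < ereal h" "dist E c {} x' w < ereal h"
  shows "x = x'"
proof (rule ccontr)
  assume "x \<noteq> x'"
  have "dist E c {} x x' \<le> dist E c {} x w + dist E c {} x' w"
    using dist_triangle[OF cost_nonneg, of "{}" x x' w] dist_commute[OF cost_nonneg, of "{}" w x'] by simp
  also have "\<dots> < ereal (2 * h)" using assms(4,5) by (rule ereal_add_less_double)
  finally show False using assms(1-3) \<open>x \<noteq> x'\<close> unfolding separated_def by (meson not_le)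
qed

lemma ball_share_two_centres:
  assumes "separated E c (2 * h) X" "{u, v} \<in> E" "x1 \<in> X" "x2 \<in> X" "x1 \<noteq> x2"
    and x1: "dist E c {} x1 u < ereal h" "\<not> dist E c {} x1 v < ereal h"
    and x2: "dist E c {} x2 v < ereal h" "\<not> dist E c {} x2 u < ereal h"
  shows "ball_share E c x1 h {u, v} + ball_share E c x2 h {u, v} \<le> c {u, v}"
proof -
  have "u \<noteq> v" using graph_edge[OF graph assms(2)] by (metis doubleton_eq_iff insert_absorb2)
  define d1 where "d1 = capped_dist E c x1 h u"
  define d2 where "d2 = capped_dist E c x2 h v"
  have d1: "dist E c {} x1 u = ereal d1" and d2: "dist E c {} v x2 = ereal d2"
    using dist_real[OF cost_nonneg x1(1)] dist_real[OF cost_nonneg x2(1)] x1(1) x2(1)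
      dist_commute[OF cost_nonneg, of "{}" v x2]
    by (simp_all add: d1_def d2_def capped_dist_def)
  have "dist E c {} x1 x2 \<le> dist E c {} x1 u + dist E c {} u x2"
    by (rule dist_triangle[OF cost_nonneg])
  also have "dist E c {} u x2 \<le> dist E c {} u v + dist E c {} v x2"
    by (rule dist_triangle[OF cost_nonneg])
  also have "dist E c {} u v \<le> ereal (c {u, v})" by (rule dist_edge[OF cost_nonneg assms(2)])
  finally have "dist E c {} x1 x2 \<le> ereal (d1 + c {u, v} + d2)"
    using d1 d2 by (simp add: add_mono add.assoc)
  moreover have "ereal (2 * h) \<le> dist E c {} x1 x2"
    using assms(1,3-5) unfolding separated_def by blast
  ultimately have "2 * h \<le> d1 + c {u, v} + d2" by (meson ereal_less_eq(3) order_trans)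
  moreover have "capped_dist E c x1 h v = h" "capped_dist E c x2 h u = h"
    using x1(2) x2(2) unfolding capped_dist_def by simp_all
  moreover have "ball_share E c x h {u, v} \<le> (h - capped_dist E c x h u) + (h - capped_dist E c x h v)"
    for x
    unfolding ball_share_def using \<open>u \<noteq> v\<close> by simp
  ultimately show ?thesis unfolding d1_def d2_def by (smt (verit))
qed

lemma ball_share_packing:
  assumes X: "finite X" "separated E c (2 * h) X" and e: "e \<in> E"
  shows "(\<Sum>x\<in>X. ball_share E c x h e) \<le> c e"
proof -
  obtain u v where uv: "e = {u, v}" "u \<noteq> v" using graph_edge[OF graph e] by blast
  define Xu where "Xu = {x \<in> X. dist E c {} x u < ereal h}"
  define Xv where "Xv = {x \<in> X. dist E c {} x v < ereal h}"
  have "ball_share E c x h e = 0" if "x \<notin> Xu \<union> Xv" "x \<in> X" for x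
    using that uv capped_dist_far[of h E c x u] capped_dist_far[of h E c x v] cost_nonneg e
    unfolding ball_share_def Xu_def Xv_def by (auto simp: not_less)
  then have sum_eq: "(\<Sum>x\<in>X. ball_share E c x h e) = (\<Sum>x\<in>Xu \<union> Xv. ball_share E c x h e)"
    using X(1) by (intro sum.mono_neutral_right) (auto simp: Xu_def Xv_def)
  have "Xu = {} \<or> (\<exists>x. Xu = {x})" "Xv = {} \<or> (\<exists>x. Xv = {x})"
    using separated_close_unique[OF X(2)] unfolding Xu_def Xv_def by blast+
  then consider x0 where "Xu \<union> Xv \<subseteq> {x0}" | x1 x2 where "Xu = {x1}" "Xv = {x2}" "x1 \<noteq> x2"
    by (metis Un_absorb Un_empty_left Un_empty_right empty_subsetI subset_refl)
  then show ?thesis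
  proof cases
    case 1
    then have "Xu \<union> Xv = {} \<or> Xu \<union> Xv = {x0}" by blast
    moreover have "ball_share E c x0 h e \<le> c e" by (simp add: ball_share_def)
    ultimately show ?thesis using sum_eq cost_nonneg e by auto
  next
    case 2
    then have "x1 \<in> Xu" "x2 \<in> Xv" "x1 \<notin> Xv" "x2 \<notin> Xu" by auto
    then have "ball_share E c x1 h e + ball_share E c x2 h e \<le> c e"
      using ball_share_two_centres[OF X(2) e[unfolded uv(1)]] 2(3) unfolding Xu_def Xv_def uv(1) by simp
    then show ?thesis using sum_eq 2 by simp
  qed
qed

end

section \<open>Covering pairs by scenarios\<close>

text \<open>The bound \<open>card DD * k \<le> card A + k - 1\<close> says \<open>card DD \<le> \<lceil>card A / k\<rceil>\<close>.\<close>

lemma scenario_cover: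
  assumes "finite U" "1 \<le> k" "k \<le> card U" "A \<subseteq> U"
  shows "\<exists>DD. DD \<subseteq> scenarios U k \<and> finite DD \<and> card DD * k \<le> card A + k - 1
           \<and> (\<forall>a\<in>A. \<exists>D\<in>DD. a \<in> D)"
  using assms(4)
proof (induction "card A" arbitrary: A rule: less_induct)
  case less
  have fA: "finite A" using less.prems assms(1) finite_subset by blast
  show ?case
  proof (cases "card A \<le> k")
    case True
    have "k - card A \<le> card (U - A)" using card_Diff_subset[OF fA less.prems] assms by simp
    then obtain B where B: "B \<subseteq> U - A" "card B = k - card A" "finite B"
      by (rule obtain_subset_with_card_n)
    have "card (A \<union> B) = k" using B fA True by (subst card_Un_disjoint) auto
    then have "A \<union> B \<in> scenarios U k" using B less.prems unfolding scenarios_def by auto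
    show ?thesis
    proof (cases "A = {}")
      case True
      then show ?thesis by (intro exI[of _ "{}"]) auto
    next
      case False
      then have "1 \<le> card A" using fA by (simp add: Suc_le_eq card_gt_0_iff)
      then show ?thesis using \<open>A \<union> B \<in> scenarios U k\<close> by (intro exI[of _ "{A \<union> B}"]) auto
    qed
  next
    case False
    then obtain B where B: "B \<subseteq> A" "card B = k" "finite B"
      using obtain_subset_with_card_n[of k A] by (metis nat_le_linear)
    have card_AB: "card (A - B) = card A - k" using card_Diff_subset[OF B(3,1)] B(2) by simp
    then obtain DD where DD: "DD \<subseteq> scenarios U k" "finite DD" "card DD * k \<le> card (A - B) + k - 1"
      "\<forall>a\<in>A - B. \<exists>D\<in>DD. a \<in> D"
      using less.hyps[of "A - B"] less.prems assms(2) False by auto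
    have "B \<in> scenarios U k" using B less.prems unfolding scenarios_def by auto
    moreover have "card (insert B DD) * k \<le> (card DD + 1) * k"
      using DD(2) by (intro mult_right_mono) (simp_all add: card_insert_if)
    moreover have "(card DD + 1) * k \<le> card A + k - 1" using DD(3) card_AB False by simp
    ultimately show ?thesis using DD by (intro exI[of _ "insert B DD"]) auto
  qed
qed

lemma scenario_cover_cost:
  fixes c :: "'v set \<Rightarrow> real" and ED :: "('v \<times> 'v) set \<Rightarrow> 'v set set"
  assumes "finite U" "1 \<le> k" "k \<le> card U" "A \<subseteq> U"
    and Ts: "\<forall>D\<in>scenarios U k. sum c (ED D) \<le> Ts" "0 \<le> Ts" "Ts \<le> T"
  obtains DD where "DD \<subseteq> scenarios U k" "finite DD" "\<forall>a\<in>A. \<exists>D\<in>DD. a \<in> D"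
    "(\<Sum>D\<in>DD. sum c (ED D)) \<le> Ts + real (card A) * (T / real k)"
proof -
  obtain DD where DD: "DD \<subseteq> scenarios U k" "finite DD" "card DD * k \<le> card A + k - 1"
    "\<forall>a\<in>A. \<exists>D\<in>DD. a \<in> D"
    using scenario_cover[OF assms(1-4)] by blast
  have k: "0 < real k" using assms(2) by simp
  have "real (card DD * k) \<le> real (card A + k - 1)" using DD(3) by (simp only: of_nat_le_iff)
  then have "real (card DD) * real k \<le> real (card A) + real k - 1"
    using assms(2) by (simp add: of_nat_diff)
  then have "real (card DD) * real k * Ts \<le> (real (card A) + real k - 1) * Ts"
    using Ts(2) by (rule mult_right_mono)
  also have "\<dots> = real (card A) * Ts + (real k - 1) * Ts" by (simp add: algebra_simps)
  also have "\<dots> \<le> real (card A) * T + real k * Ts"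
    using Ts(2,3) by (intro add_mono mult_left_mono mult_right_mono) auto
  finally have "real k * (real (card DD) * Ts) \<le> real k * (Ts + real (card A) * (T / real k))"
    using k by (simp add: algebra_simps)
  then have "real (card DD) * Ts \<le> Ts + real (card A) * (T / real k)" using k by simp
  moreover have "(\<Sum>D\<in>DD. sum c (ED D)) \<le> real (card DD) * Ts"
    using Ts(1) DD(1) by (intro sum_bounded_above) blast
  ultimately show ?thesis using DD that by (meson order_trans)
qed

lemma finite_scenarios: "finite U \<Longrightarrow> finite (scenarios U k)"
  unfolding scenarios_def by (rule finite_subset[of _ "Pow U"]) auto

lemma second_stage_ge:
  "finite U \<Longrightarrow> D \<in> scenarios U k \<Longrightarrow> sum c (ED D) \<le> second_stage c U k ED"
  unfolding second_stage_def using finite_scenarios by (intro Max_ge) auto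

lemma second_stage_nonneg:
  assumes "finite U" "k \<le> card U" "robust_feasible E U k E0 ED" "\<forall>e\<in>E. 0 \<le> c e"
  shows "0 \<le> second_stage c U k ED"
proof -
  obtain D where "D \<subseteq> U" "card D = k" using obtain_subset_with_card_n[OF assms(2)] by metis
  then have D: "D \<in> scenarios U k" unfolding scenarios_def by simp
  then have "0 \<le> sum c (ED D)"
    using assms(3,4) unfolding robust_feasible_def by (auto intro!: sum_nonneg)
  also have "\<dots> \<le> second_stage c U k ED" by (rule second_stage_ge[OF assms(1) D])
  finally show ?thesis .
qed

context
  fixes V :: "'v set" and E :: "'v set set" and c :: "'v set \<Rightarrow> real" and U :: "('v \<times> 'v) set"
    and k :: nat and E0 :: "'v set set" and ED :: "('v \<times> 'v) set \<Rightarrow> 'v set set"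
  assumes graph: "graph V E" and cost_nonneg: "\<forall>e\<in>E. 0 \<le> c e"
    and feasible: "robust_feasible E U k E0 ED"
begin

lemma first_stage_edges: "E0 \<subseteq> E"
  using feasible unfolding robust_feasible_def by blast

lemma first_stage_cost_nonneg: "0 \<le> sum c E0"
  using first_stage_edges cost_nonneg by (intro sum_nonneg) auto

lemma second_stage_edges: "D \<in> scenarios U k \<Longrightarrow> ED D \<subseteq> E"
  using feasible unfolding robust_feasible_def by blast

lemma scenario_connects: "D \<in> scenarios U k \<Longrightarrow> (s, t) \<in> D \<Longrightarrow> connects (E0 \<union> ED D) s t"
  using feasible unfolding robust_feasible_def by blast

lemma steiner_opt_le_scenario_cover:
  assumes "DD \<subseteq> scenarios U k" "finite DD" "\<forall>a\<in>P. \<exists>D\<in>DD. a \<in> D"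
  shows "steiner_opt E c P \<le> sum c E0 + (\<Sum>D\<in>DD. sum c (ED D))"
proof -
  define F0 where "F0 = E0 \<union> (\<Union>D\<in>DD. ED D)"
  have F0E: "F0 \<subseteq> E" unfolding F0_def using first_stage_edges second_stage_edges assms(1) by blast
  have "steiner_forest E P F0"
    unfolding steiner_forest_def
  proof (intro conjI F0E ballI)
    fix st assume "st \<in> P"
    then obtain D where D: "D \<in> DD" "st \<in> D" using assms(3) by blast
    obtain s t where st: "st = (s, t)" by fastforce
    then have "connects (E0 \<union> ED D) s t" using scenario_connects D assms(1) by blast
    then show "case st of (s, t) \<Rightarrow> connects F0 s t"
      using D(1) st unfolding F0_def by (auto elim: connects_mono)
  qed
  then have "steiner_opt E c P \<le> sum c F0"
    unfolding steiner_opt_def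
    by (intro cInf_lower bdd_belowI[of _ 0])
       (use cost_nonneg in \<open>auto simp: steiner_forest_def intro!: sum_nonneg\<close>)
  also have "sum c F0 \<le> sum c E0 + sum c (\<Union>D\<in>DD. ED D)"
    unfolding F0_def using graph_finite_edges[OF graph] F0E cost_nonneg
    by (intro sum_Un_le_nonneg) (auto simp: F0_def intro: finite_subset)
  also have "sum c (\<Union>D\<in>DD. ED D) \<le> (\<Sum>D\<in>DD. sum c (ED D))"
    using assms(1,2) second_stage_edges graph_finite_edges[OF graph] cost_nonneg
    by (intro sum_UN_le_nonneg) (auto intro: finite_subset)
  finally show ?thesis by simp
qed

lemma ball_share_connects:
  assumes "F \<subseteq> E" "connects F x y" "ereal h \<le> dist E c {} x y" "0 \<le> h"
  shows "h \<le> (\<Sum>e\<in>F. ball_share E c x h e)"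
proof -
  have "finite F" using assms(1) graph_finite_edges[OF graph] finite_subset by blast
  then have "capped_dist E c x h y - capped_dist E c x h x \<le> (\<Sum>e\<in>F. ball_share E c x h e)"
    using capped_dist_diff_le_ball_share[OF graph cost_nonneg _ assms(1,4)] assms(2)
    unfolding connects_def by blast
  then show ?thesis
    using capped_dist_far[OF assms(3)] capped_dist_self[OF graph cost_nonneg assms(4)] by simp
qed

lemma sum_ball_share_scenarios_le:
  assumes "finite W" "separated E c (2 * h) W" "DD \<subseteq> scenarios U k" "finite DD"
    and "\<forall>x\<in>W. j x \<in> DD"
  shows "(\<Sum>x\<in>W. \<Sum>e\<in>ED (j x). ball_share E c x h e) \<le> (\<Sum>D\<in>DD. sum c (ED D))"
proof -
  have "(\<Sum>x\<in>W. \<Sum>e\<in>ED (j x). ball_share E c x h e)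
      = (\<Sum>D\<in>DD. \<Sum>x\<in>{x \<in> W. j x = D}. \<Sum>e\<in>ED (j x). ball_share E c x h e)"
    using assms(1,4,5) by (intro sum.group[symmetric]) auto
  also have "\<dots> = (\<Sum>D\<in>DD. \<Sum>x\<in>{x \<in> W. j x = D}. \<Sum>e\<in>ED D. ball_share E c x h e)"
    by (intro sum.cong refl) auto
  also have "\<dots> = (\<Sum>D\<in>DD. \<Sum>e\<in>ED D. \<Sum>x\<in>{x \<in> W. j x = D}. ball_share E c x h e)"
    by (rule sum.cong[OF refl]) (rule sum.swap)
  also have "\<dots> \<le> (\<Sum>D\<in>DD. sum c (ED D))"
  proof (intro sum_mono)
    fix D e assume "D \<in> DD" "e \<in> ED D"
    then have "e \<in> E" using second_stage_edges assms(3) by blast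
    moreover have "separated E c (2 * h) {x \<in> W. j x = D}"
      using assms(2) unfolding separated_def by blast
    ultimately show "(\<Sum>x\<in>{x \<in> W. j x = D}. ball_share E c x h e) \<le> c e"
      using ball_share_packing[OF graph cost_nonneg] assms(1) by simp
  qed
  finally show ?thesis .
qed

lemma separated_points_cost:
  assumes "0 \<le> h" "finite W" "separated E c (2 * h) W" "DD \<subseteq> scenarios U k" "finite DD"
    and j: "\<forall>x\<in>W. j x \<in> DD \<and> (\<exists>y. ((x, y) \<in> j x \<or> (y, x) \<in> j x) \<and> ereal h \<le> dist E c {} x y)"
  shows "real (card W) * h \<le> sum c E0 + (\<Sum>D\<in>DD. sum c (ED D))"
proof -
  let ?share = "\<lambda>x e. ball_share E c x h e"
  have fin: "finite E" using graph_finite_edges[OF graph] .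
  have each: "h \<le> (\<Sum>e\<in>E0. ?share x e) + (\<Sum>e\<in>ED (j x). ?share x e)" if x: "x \<in> W" for x
  proof -
    obtain y where y: "(x, y) \<in> j x \<or> (y, x) \<in> j x" "ereal h \<le> dist E c {} x y"
      using j x by blast
    have scen: "j x \<in> scenarios U k" using j x assms(4) by blast
    then have "connects (E0 \<union> ED (j x)) x y"
      using y(1) scenario_connects[OF scen, of x y] scenario_connects[OF scen, of y x]
        connects_sym[of "E0 \<union> ED (j x)" y x] by blast
    moreover have sub: "E0 \<union> ED (j x) \<subseteq> E" using first_stage_edges second_stage_edges scen by blast
    ultimately have "h \<le> (\<Sum>e\<in>E0 \<union> ED (j x). ?share x e)"
      using ball_share_connects y(2) assms(1) by blast
    also have "\<dots> \<le> (\<Sum>e\<in>E0. ?share x e) + (\<Sum>e\<in>ED (j x). ?share x e)"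
      using sub fin ball_share_nonneg[OF graph cost_nonneg _ assms(1)]
      by (intro sum_Un_le_nonneg) (auto intro: finite_subset)
    finally show ?thesis .
  qed
  have "(\<Sum>x\<in>W. \<Sum>e\<in>E0. ?share x e) = (\<Sum>e\<in>E0. \<Sum>x\<in>W. ?share x e)" by (rule sum.swap)
  also have "\<dots> \<le> sum c E0"
    using ball_share_packing[OF graph cost_nonneg assms(2,3)] first_stage_edges
    by (intro sum_mono) auto
  finally have "(\<Sum>x\<in>W. \<Sum>e\<in>E0. ?share x e) \<le> sum c E0" .
  moreover have "\<forall>x\<in>W. j x \<in> DD" using j by blast
  then have "(\<Sum>x\<in>W. \<Sum>e\<in>ED (j x). ?share x e) \<le> (\<Sum>D\<in>DD. sum c (ED D))"
    by (rule sum_ball_share_scenarios_le[OF assms(2-5)])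
  moreover have "(\<Sum>x\<in>W. h) \<le> (\<Sum>x\<in>W. (\<Sum>e\<in>E0. ?share x e) + (\<Sum>e\<in>ED (j x). ?share x e))"
    using each by (rule sum_mono)
  ultimately show ?thesis by (simp add: sum.distrib)
qed

end

section \<open>Invariants of the procedure\<close>

text \<open>\<open>rep_bound S n W\<close>: some choice of representatives in \<open>W\<close>, each identified by \<open>S\<close> with the
  points it represents, takes at most \<open>card W - n\<close> values; so \<open>S\<close> merges \<open>W\<close> into at most
  \<open>card W - n\<close> classes.\<close>

definition rep_bound :: "('v \<times> 'v) set \<Rightarrow> nat \<Rightarrow> 'v set \<Rightarrow> bool" where
  "rep_bound S n W \<longleftrightarrow>
     (\<exists>rep. (\<forall>w\<in>W. rep w \<in> W \<and> (w, rep w) \<in> identified S) \<and> n + card (rep ` W) \<le> card W)"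

lemma rep_bound_empty: "rep_bound S 0 {}"
  unfolding rep_bound_def by simp

lemma rep_bound_le_card: "rep_bound S n W \<Longrightarrow> n \<le> card W"
  unfolding rep_bound_def by auto

lemma rep_bound_mono: "S \<subseteq> S' \<Longrightarrow> rep_bound S n W \<Longrightarrow> rep_bound S' n W"
  unfolding rep_bound_def using identified_mono by blast

lemma rep_bound_insert:
  assumes "finite W" "x \<notin> W" "rep_bound S n W"
  shows "rep_bound S n (insert x W)"
proof -
  obtain rep where rep: "\<forall>w\<in>W. rep w \<in> W \<and> (w, rep w) \<in> identified S" "n + card (rep ` W) \<le> card W"
    using assms(3) unfolding rep_bound_def by blast
  let ?rep = "rep(x := x)"
  have "?rep ` insert x W = insert x (rep ` W)"
    using assms(2) by (auto intro!: image_cong)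
  then have "n + card (?rep ` insert x W) \<le> card (insert x W)"
    using rep(2) assms(1,2) by (simp add: card_insert_if)
  moreover have "\<forall>w\<in>insert x W. ?rep w \<in> insert x W \<and> (w, ?rep w) \<in> identified S"
    using rep(1) identified_refl by auto
  ultimately show ?thesis unfolding rep_bound_def by blast
qed

lemma rep_bound_insert_identified:
  assumes "finite W" "x \<notin> W" "w \<in> W" "(x, w) \<in> identified S" "rep_bound S n W"
  shows "rep_bound S (Suc n) (insert x W)"
proof -
  obtain rep where rep: "\<forall>w\<in>W. rep w \<in> W \<and> (w, rep w) \<in> identified S" "n + card (rep ` W) \<le> card W"
    using assms(5) unfolding rep_bound_def by blast
  let ?rep = "rep(x := rep w)"
  have "?rep ` insert x W = rep ` W"
    using assms(2,3) by (auto intro!: image_cong)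
  then have "Suc n + card (?rep ` insert x W) \<le> card (insert x W)"
    using rep(2) assms(1,2) by simp
  moreover have "\<forall>v\<in>insert x W. ?rep v \<in> insert x W \<and> (v, ?rep v) \<in> identified S"
    using rep(1) assms(2-4) identified_trans[of x w S "rep w"] by auto
  ultimately show ?thesis unfolding rep_bound_def by blast
qed

lemma rep_bound_merge:
  assumes "finite W" "w1 \<in> W" "w2 \<in> W" "S \<subseteq> S'"
    and "(w1, w2) \<in> identified S'" "(w1, w2) \<notin> identified S" "rep_bound S n W"
  shows "rep_bound S' (Suc n) W"
proof -
  obtain rep where rep: "\<forall>w\<in>W. rep w \<in> W \<and> (w, rep w) \<in> identified S" "n + card (rep ` W) \<le> card W"
    using assms(7) unfolding rep_bound_def by blast
  have rep': "(w, rep w) \<in> identified S'" if "w \<in> W" for w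
    using rep(1) that identified_mono[OF assms(4)] by blast
  have "rep w1 \<noteq> rep w2"
  proof
    assume same: "rep w1 = rep w2"
    have "(w1, rep w1) \<in> identified S" using rep(1) assms(2) by blast
    then have "(w1, rep w2) \<in> identified S" unfolding same .
    moreover have "(rep w2, w2) \<in> identified S" using rep(1) assms(3) by (simp add: identified_sym)
    ultimately have "(w1, w2) \<in> identified S" by (rule identified_trans)
    with assms(6) show False by contradiction
  qed
  define rep2 where "rep2 v = (if rep v = rep w2 then rep w1 else rep v)" for v
  have "(v, rep2 v) \<in> identified S'" if "v \<in> W" for v
  proof (cases "rep v = rep w2")
    case True
    have "(v, rep w2) \<in> identified S'" using rep'[OF that] True by simp
    moreover have "(rep w2, w2) \<in> identified S'" using rep'[OF assms(3)] by (rule identified_sym)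
    moreover have "(w2, w1) \<in> identified S'" using assms(5) by (rule identified_sym)
    ultimately have "(v, rep w1) \<in> identified S'"
      using rep'[OF assms(2)] by (meson identified_trans)
    then show ?thesis using True unfolding rep2_def by simp
  qed (use rep' that in \<open>simp add: rep2_def\<close>)
  moreover have "rep2 v \<in> W" if "v \<in> W" for v
    using rep(1) that assms(2) by (simp add: rep2_def)
  moreover have "card (rep2 ` W) < card (rep ` W)"
  proof -
    have "rep2 ` W \<subseteq> rep ` W - {rep w2}"
      using \<open>rep w1 \<noteq> rep w2\<close> assms(2) by (auto simp: rep2_def)
    then have "card (rep2 ` W) \<le> card (rep ` W - {rep w2})"
      using assms(1) by (intro card_mono) auto
    also have "\<dots> < card (rep ` W)"
      using assms(1,3) by (intro card_Diff1_less) auto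
    finally show ?thesis .
  qed
  ultimately show ?thesis using rep(2) unfolding rep_bound_def by (intro exI[of _ rep2]) auto
qed

context
  fixes E :: "'v set set" and c :: "'v set \<Rightarrow> real"
  assumes cost_nonneg: "\<forall>e\<in>E. 0 \<le> c e"
begin

lemma separated_insert:
  assumes "separated E c r W" "\<forall>w\<in>W. \<not> dist E c {} x w < ereal r"
  shows "separated E c r (insert x W)"
proof -
  have "\<forall>w\<in>W. ereal r \<le> dist E c {} x w \<and> ereal r \<le> dist E c {} w x"
    using assms(2) dist_commute[OF cost_nonneg, of "{}" x] by (simp add: not_less)
  then show ?thesis using assms(1) unfolding separated_def by blast
qed

lemma proc_terminal_invariant:
  assumes "proc_terminal E c r x (Sf, W) (Sf', W')"
    and "finite Sf" "finite W" "separated E c r W" "\<forall>(y, w)\<in>Sf. dist E c {} y w < ereal r"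
  shows "finite Sf' \<and> finite W' \<and> separated E c r W' \<and> (\<forall>(y, w)\<in>Sf'. dist E c {} y w < ereal r)
    \<and> card Sf' + card W' \<le> Suc (card Sf + card W) \<and> Sf \<subseteq> Sf' \<and> W' \<subseteq> insert x W"
  using assms(1) unfolding proc_terminal_def
proof (elim disjE bexE conjE)
  fix w assume "dist E c {} x w < ereal r" "(Sf', W') = (insert (x, w) (fst (Sf, W)), snd (Sf, W))"
  then show ?thesis using assms(2-5) by (auto simp: card_insert_if)
next
  assume "\<forall>w\<in>snd (Sf, W). \<not> dist E c {} x w < ereal r" "(Sf', W') = (fst (Sf, W), insert x (snd (Sf, W)))"
  then show ?thesis using assms(2-5) separated_insert by (auto simp: card_insert_if)
qed

lemma violated_not_identified:
  assumes "2 * r \<le> b" "violated E c b Sr Sf s t"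
    and "dist E c {} s a < ereal r" "dist E c {} a' t < ereal r"
  shows "(a, a') \<notin> identified (Sr \<union> Sf)"
proof
  let ?S = "Sr \<union> Sf"
  assume "(a, a') \<in> identified ?S"
  have "dist E c ?S s t \<le> dist E c ?S s a + dist E c ?S a t"
    by (rule dist_triangle[OF cost_nonneg])
  also have "dist E c ?S a t \<le> dist E c ?S a a' + dist E c ?S a' t"
    by (rule dist_triangle[OF cost_nonneg])
  also have "dist E c ?S a a' = 0"
    by (rule dist_identified[OF cost_nonneg \<open>(a, a') \<in> identified ?S\<close>])
  also have "dist E c ?S s a \<le> dist E c {} s a" by (rule dist_contract_le[OF cost_nonneg])
  also have "dist E c ?S a' t \<le> dist E c {} a' t" by (rule dist_contract_le[OF cost_nonneg])
  finally have "dist E c ?S s t \<le> dist E c {} s a + dist E c {} a' t"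
    by (simp add: add_mono)
  also have "\<dots> < ereal (2 * r)" using assms(3,4) by (rule ereal_add_less_double)
  also have "\<dots> \<le> ereal b" using assms(1) by simp
  finally show False using assms(2) unfolding violated_def by simp
qed

lemma rep_bound_first_terminal:
  assumes "0 < r" "proc_terminal E c r s (Sf, W) (Sf1, W1)" "finite W" "rep_bound S n W"
  shows "rep_bound S n W1 \<and> (\<exists>a\<in>W1. dist E c {} s a < ereal r \<and> (s = a \<or> (s, a) \<in> Sf1))"
proof -
  have close: "dist E c {} s s < ereal r"
    using dist_self[OF cost_nonneg, of "{}" s] assms(1) by (simp add: zero_ereal_def)
  from assms(2) consider
      (attached) w where "w \<in> W" "dist E c {} s w < ereal r" "Sf1 = insert (s, w) Sf" "W1 = W"
    | (new) "\<forall>w\<in>W. \<not> dist E c {} s w < ereal r" "Sf1 = Sf" "W1 = insert s W"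
    unfolding proc_terminal_def by auto
  then show ?thesis
  proof cases
    case new
    then have "s \<notin> W" using close by blast
    then show ?thesis using rep_bound_insert[OF assms(3) _ assms(4)] new(3) close by auto
  qed (use assms(4) in auto)
qed

text \<open>The second terminal \<open>t\<close> of the new pair either joins the class of the point \<open>a\<close> that
  \<open>s\<close> was attached to (or became), or is attached to a point \<open>w'\<close> whose class differs from that
  of \<open>a\<close>, since otherwise \<open>s\<close> and \<open>t\<close> would be closer than \<open>2r\<close> in the contracted graph.\<close>

lemma rep_bound_second_terminal:
  assumes "0 < r" "2 * r \<le> b" and viol: "violated E c b Sr Sf s t"
    and p2: "proc_terminal E c r t (Sf1, W1) (Sf2, W2)" and "finite W1" "Sf \<subseteq> Sf1"
    and rb: "rep_bound (Sr \<union> Sf) (card Sr) W1"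
    and a: "a \<in> W1" "dist E c {} s a < ereal r" "(s, a) \<in> identified (insert (s, t) Sr \<union> Sf2)"
  shows "rep_bound (insert (s, t) Sr \<union> Sf2) (Suc (card Sr)) W2"
proof -
  let ?S = "Sr \<union> Sf" and ?S2 = "insert (s, t) Sr \<union> Sf2"
  have "Sf1 \<subseteq> Sf2" using p2 unfolding proc_terminal_def by auto
  then have SS2: "?S \<subseteq> ?S2" using assms(6) by auto
  have ts: "(t, s) \<in> identified ?S2" using identified_pair[of s t ?S2] by simp
  from p2 consider
      (attached) w' where "w' \<in> W1" "dist E c {} t w' < ereal r" "Sf2 = insert (t, w') Sf1" "W2 = W1"
    | (new) "\<forall>w\<in>W1. \<not> dist E c {} t w < ereal r" "Sf2 = Sf1" "W2 = insert t W1"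
    unfolding proc_terminal_def by auto
  then show ?thesis
  proof cases
    case attached
    have "(t, w') \<in> identified ?S2" using identified_pair[of t w' ?S2] attached(3) by simp
    then have "(a, w') \<in> identified ?S2"
      by (rule identified_trans[OF identified_trans[OF identified_sym[OF a(3)] identified_sym[OF ts]]])
    moreover have "(a, w') \<notin> identified ?S"
      using violated_not_identified[OF assms(2) viol a(2)] attached(2)
        dist_commute[OF cost_nonneg, of "{}" t w'] by simp
    ultimately show ?thesis using rep_bound_merge[OF assms(5) a(1) attached(1) SS2 _ _ rb] attached(4) by simp
  next
    case new
    have "t \<notin> W1"
      using new(1) dist_self[OF cost_nonneg, of "{}" t] assms(1) by (auto simp: zero_ereal_def)
    moreover have "(t, a) \<in> identified ?S2" by (rule identified_trans[OF ts a(3)])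
    ultimately show ?thesis
      using rep_bound_insert_identified[OF assms(5) _ a(1) _ rep_bound_mono[OF SS2 rb]] new(3) by simp
  qed
qed

lemma rep_bound_step:
  assumes "0 < r" "2 * r \<le> b" "violated E c b Sr Sf s t"
    and p1: "proc_terminal E c r s (Sf, W) (Sf1, W1)"
    and p2: "proc_terminal E c r t (Sf1, W1) (Sf2, W2)"
    and "finite W" "rep_bound (Sr \<union> Sf) (card Sr) W"
  shows "rep_bound (insert (s, t) Sr \<union> Sf2) (Suc (card Sr)) W2"
proof -
  note first = rep_bound_first_terminal[OF assms(1) p1 assms(6,7)]
  then obtain a where a: "a \<in> W1" "dist E c {} s a < ereal r" "s = a \<or> (s, a) \<in> Sf1" by blast
  have "Sf \<subseteq> Sf1" "Sf1 \<subseteq> Sf2" "finite W1"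
    using p1 p2 assms(6) unfolding proc_terminal_def by auto
  then have "(s, a) \<in> identified (insert (s, t) Sr \<union> Sf2)"
    using a(3) identified_refl[of s] identified_pair[of s a "insert (s, t) Sr \<union> Sf2"] by auto
  then show ?thesis
    using rep_bound_second_terminal[OF assms(1-3) p2 \<open>finite W1\<close> \<open>Sf \<subseteq> Sf1\<close>
        conjunct1[OF first] a(1,2)] by blast
qed

end

text \<open>Without the guard \<open>0 < r\<close> the count fails: for \<open>r = 0\<close> no terminal is ever attached, so a
  terminal already in \<open>W\<close> is added again without increasing \<open>card W\<close>.\<close>

definition run_invariant ::
  "'v set set \<Rightarrow> ('v set \<Rightarrow> real) \<Rightarrow> ('v \<times> 'v) set \<Rightarrow> real \<Rightarrow> real \<Rightarrow>
   ('v \<times> 'v) set \<Rightarrow> ('v \<times> 'v) set \<Rightarrow> 'v set \<Rightarrow> bool" where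
  "run_invariant E c U b r Sr Sf W \<longleftrightarrow>
     finite Sr \<and> Sr \<subseteq> U \<and> finite Sf \<and> finite W \<and> card Sf + card W \<le> 2 * card Sr \<and>
     (\<forall>(s, t)\<in>Sr. ereal b < dist E c {} s t) \<and> W \<subseteq> Domain Sr \<union> Range Sr \<and>
     separated E c r W \<and> (\<forall>(x, w)\<in>Sf. dist E c {} x w < ereal r) \<and>
     (0 < r \<longrightarrow> rep_bound (Sr \<union> Sf) (card Sr) W)"

lemma run_invariant_init: "run_invariant E c U b r {} {} {}"
  unfolding run_invariant_def separated_def by (simp add: rep_bound_empty)

lemma run_invariant_card:
  assumes "run_invariant E c U b r Sr Sf W"
  shows "card Sf + card W \<le> 2 * card Sr" and "0 < r \<Longrightarrow> card Sr \<le> card W"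
  using assms rep_bound_le_card unfolding run_invariant_def by auto

context
  fixes E :: "'v set set" and c :: "'v set \<Rightarrow> real"
  assumes cost_nonneg: "\<forall>e\<in>E. 0 \<le> c e"
begin

lemma run_invariant_step:
  assumes "0 \<le> r" "2 * r \<le> b" and inv: "run_invariant E c U b r Sr Sf W"
    and step: "proc_step E c U b r (Sr, Sf, W) (Sr', Sf', W')"
  shows "run_invariant E c U b r Sr' Sf' W'"
proof -
  obtain s t Sf1 W1 where stU: "(s, t) \<in> U" and viol: "violated E c b Sr Sf s t"
    and Sr': "Sr' = insert (s, t) Sr"
    and p1: "proc_terminal E c r s (Sf, W) (Sf1, W1)" and p2: "proc_terminal E c r t (Sf1, W1) (Sf', W')"
    using step unfolding proc_step_def by fastforce
  from inv have fin: "finite Sr" "finite Sf" "finite W" and SrU: "Sr \<subseteq> U"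
    and card: "card Sf + card W \<le> 2 * card Sr"
    and far: "\<forall>(s, t)\<in>Sr. ereal b < dist E c {} s t" and cover: "W \<subseteq> Domain Sr \<union> Range Sr"
    and sep: "separated E c r W" and short: "\<forall>(x, w)\<in>Sf. dist E c {} x w < ereal r"
    and classes: "0 < r \<longrightarrow> rep_bound (Sr \<union> Sf) (card Sr) W"
    unfolding run_invariant_def by blast+
  have "ereal b < dist E c {} s t"
    using viol dist_contract_le[OF cost_nonneg] unfolding violated_def by (rule order_less_le_trans)
  moreover have "(s, t) \<notin> Sr"
  proof
    assume "(s, t) \<in> Sr"
    then have "dist E c (Sr \<union> Sf) s t = 0"
      using identified_pair[of s t "Sr \<union> Sf"] dist_identified[OF cost_nonneg] by blast
    then show False using viol assms(1,2) unfolding violated_def by (simp add: zero_ereal_def)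
  qed
  moreover note T1 = proc_terminal_invariant[OF cost_nonneg p1 fin(2,3) sep short]
  moreover note T2 = proc_terminal_invariant[OF cost_nonneg p2, simplified T1]
  moreover have "W' \<subseteq> Domain Sr' \<union> Range Sr'"
  proof -
    have "W' \<subseteq> insert s (insert t W)" using T1 T2 by blast
    then show ?thesis using cover unfolding Sr' by auto
  qed
  moreover have "0 < r \<longrightarrow> rep_bound (Sr' \<union> Sf') (card Sr') W'"
    using classes rep_bound_step[OF cost_nonneg _ assms(2) viol p1 p2 fin(3)] \<open>(s, t) \<notin> Sr\<close> fin(1)
    unfolding Sr' by simp
  ultimately show ?thesis
    unfolding run_invariant_def using fin SrU stU card far unfolding Sr' by auto
qed

lemma run_invariant_reachable:
  assumes "0 \<le> r" "2 * r \<le> b" "(proc_step E c U b r)\<^sup>*\<^sup>* ({}, {}, {}) (Sr, Sf, W)"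
  shows "run_invariant E c U b r Sr Sf W"
proof -
  have "case st of (Sr, Sf, W) \<Rightarrow> run_invariant E c U b r Sr Sf W"
    if "(proc_step E c U b r)\<^sup>*\<^sup>* ({}, {}, {}) st" for st
    using that
    by (induction rule: rtranclp_induct)
       (auto simp: run_invariant_init intro: run_invariant_step[OF assms(1,2)])
  then show ?thesis using assms(3) by fastforce
qed

end

section \<open>Cost of the output\<close>

lemma shortest_paths_cost:
  assumes "graph V E" "\<forall>e\<in>E. 0 \<le> c e" "finite Sf"
    and paths: "\<forall>p\<in>Sf. shortest_path E c (fst p) (snd p) (P p)"
    and short: "\<forall>(x, w)\<in>Sf. dist E c {} x w < ereal r"
  shows "(\<Union>p\<in>Sf. path_edges (P p)) \<subseteq> E"
    and "sum c (\<Union>p\<in>Sf. path_edges (P p)) \<le> real (card Sf) * r"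
proof -
  have walk: "is_walk E {} (P p)" and cost: "walk_cost c {} (P p) < r" if "p \<in> Sf" for p
  proof -
    have "shortest_path E c (fst p) (snd p) (P p)" using paths that by blast
    then have "is_walk E {} (P p)"
      and eq: "dist E c {} (fst p) (snd p) = ereal (walk_cost c {} (P p))"
      unfolding shortest_path_def by simp_all
    then show "is_walk E {} (P p)" by simp
    have "dist E c {} (fst p) (snd p) < ereal r" using short that by (cases p) auto
    then show "walk_cost c {} (P p) < r" unfolding eq by simp
  qed
  then have sub: "path_edges (P p) \<subseteq> E" if "p \<in> Sf" for p using path_edges_subset that by blast
  then show "(\<Union>p\<in>Sf. path_edges (P p)) \<subseteq> E" by blast
  have "\<forall>p\<in>Sf. finite (path_edges (P p))"
    using finite_subset[OF sub graph_finite_edges[OF assms(1)]] by blast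
  moreover have "\<forall>p\<in>Sf. \<forall>e\<in>path_edges (P p). 0 \<le> c e" using sub assms(2) by blast
  ultimately have "sum c (\<Union>p\<in>Sf. path_edges (P p)) \<le> (\<Sum>p\<in>Sf. sum c (path_edges (P p)))"
    by (rule sum_UN_le_nonneg[OF assms(3)])
  also have "\<dots> \<le> real (card Sf) * r"
    using sum_path_edges_le_walk_cost[OF walk assms(2)] cost
    by (intro sum_bounded_above) (meson less_imp_le order_trans)
  finally show "sum c (\<Union>p\<in>Sf. path_edges (P p)) \<le> real (card Sf) * r" .
qed

context
  fixes V :: "'v set" and E :: "'v set set" and c :: "'v set \<Rightarrow> real" and U :: "('v \<times> 'v) set"
    and k :: nat and E0 :: "'v set set" and ED :: "('v \<times> 'v) set \<Rightarrow> 'v set set" and T :: real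
  assumes graph: "graph V E" and cost_nonneg: "\<forall>e\<in>E. 0 \<le> c e"
    and feasible: "robust_feasible E U k E0 ED"
    and U: "finite U" "1 \<le> k" "k \<le> card U"
    and T: "second_stage c U k ED \<le> T"
begin

lemma second_stage_cover_cost:
  assumes "A \<subseteq> U"
  obtains DD where "DD \<subseteq> scenarios U k" "finite DD" "\<forall>a\<in>A. \<exists>D\<in>DD. a \<in> D"
    "(\<Sum>D\<in>DD. sum c (ED D)) \<le> second_stage c U k ED + real (card A) * (T / real k)"
proof -
  have "\<forall>D\<in>scenarios U k. sum c (ED D) \<le> second_stage c U k ED"
    using second_stage_ge[OF U(1)] by blast
  from scenario_cover_cost[OF U assms this second_stage_nonneg[OF U(1,3) feasible cost_nonneg] T]
  show thesis using that .
qed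

lemma steiner_opt_le_robust:
  assumes "A \<subseteq> U"
  shows "steiner_opt E c A \<le> sum c E0 + second_stage c U k ED + real (card A) * (T / real k)"
proof -
  obtain DD where DD: "DD \<subseteq> scenarios U k" "finite DD" "\<forall>a\<in>A. \<exists>D\<in>DD. a \<in> D"
    "(\<Sum>D\<in>DD. sum c (ED D)) \<le> second_stage c U k ED + real (card A) * (T / real k)"
    using second_stage_cover_cost[OF assms] .
  have "steiner_opt E c A \<le> sum c E0 + (\<Sum>D\<in>DD. sum c (ED D))"
    by (rule steiner_opt_le_scenario_cover[OF graph cost_nonneg feasible DD(1-3)])
  then show ?thesis using DD(4) by linarith
qed

lemma separated_endpoints_cost:
  assumes "0 \<le> h" "finite W" "separated E c (2 * h) W"
    and "A \<subseteq> U" "W \<subseteq> Domain A \<union> Range A" "\<forall>(s, t)\<in>A. ereal h \<le> dist E c {} s t"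
  shows "real (card W) * h \<le> sum c E0 + second_stage c U k ED + real (card W) * (T / real k)"
proof -
  have "\<forall>x\<in>W. \<exists>st. st \<in> A \<and> (x = fst st \<or> x = snd st)" using assms(5) by force
  from bchoice[OF this] obtain p where p: "\<forall>x\<in>W. p x \<in> A \<and> (x = fst (p x) \<or> x = snd (p x))"
    by blast
  have "p ` W \<subseteq> U" using p assms(4) by blast
  then obtain DD where DD: "DD \<subseteq> scenarios U k" "finite DD" "\<forall>a\<in>p ` W. \<exists>D\<in>DD. a \<in> D"
    "(\<Sum>D\<in>DD. sum c (ED D)) \<le> second_stage c U k ED + real (card (p ` W)) * (T / real k)"
    by (rule second_stage_cover_cost)
  have "\<forall>x\<in>W. \<exists>D. D \<in> DD \<and> p x \<in> D" using DD(3) by blast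
  from bchoice[OF this] obtain j where j: "\<forall>x\<in>W. j x \<in> DD \<and> p x \<in> j x" by blast
  have "\<forall>x\<in>W. j x \<in> DD \<and> (\<exists>y. ((x, y) \<in> j x \<or> (y, x) \<in> j x) \<and> ereal h \<le> dist E c {} x y)"
  proof
    fix x assume x: "x \<in> W"
    obtain a b where ab: "p x = (a, b)" by fastforce
    then have ab': "x = a \<or> x = b" "j x \<in> DD" "(a, b) \<in> j x" "(a, b) \<in> A"
      using p j x by (metis fst_conv snd_conv)+
    have "ereal h \<le> dist E c {} a b" using assms(6) ab'(4) by blast
    moreover have "dist E c {} b a = dist E c {} a b" by (rule dist_commute[OF cost_nonneg])
    ultimately show "j x \<in> DD \<and> (\<exists>y. ((x, y) \<in> j x \<or> (y, x) \<in> j x) \<and> ereal h \<le> dist E c {} x y)"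
      using ab'(1-3) by auto
  qed
  then have "real (card W) * h \<le> sum c E0 + (\<Sum>D\<in>DD. sum c (ED D))"
    using separated_points_cost[OF graph cost_nonneg feasible assms(1-3) DD(1,2)] by blast
  moreover have "real (card (p ` W)) * (T / real k) \<le> real (card W) * (T / real k)"
    using card_image_le[OF assms(2), of p] T second_stage_nonneg[OF U(1,3) feasible cost_nonneg]
    by (intro mult_right_mono) auto
  ultimately show ?thesis using DD(4) by linarith
qed

lemma run_output_cost:
  assumes inv: "run_invariant E c U b r Sr Sf W"
    and forest: "steiner_forest E Sr F" "sum c F \<le> 2 * steiner_opt E c Sr"
    and paths: "\<forall>p\<in>Sf. shortest_path E c (fst p) (snd p) (P p)"
  shows "sum c (F \<union> (\<Union>p\<in>Sf. path_edges (P p)))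
    \<le> 2 * (sum c E0 + second_stage c U k ED + real (card Sr) * (T / real k)) + real (card Sf) * r"
proof -
  from inv have "finite Sf" "Sr \<subseteq> U" "\<forall>(x, w)\<in>Sf. dist E c {} x w < ereal r"
    unfolding run_invariant_def by blast+
  note paths_cost = shortest_paths_cost[OF graph cost_nonneg this(1) paths this(3)]
  have "F \<subseteq> E" using forest(1) unfolding steiner_forest_def by blast
  then have "sum c (F \<union> (\<Union>p\<in>Sf. path_edges (P p))) \<le> sum c F + sum c (\<Union>p\<in>Sf. path_edges (P p))"
    using paths_cost(1) graph_finite_edges[OF graph] cost_nonneg
    by (intro sum_Un_le_nonneg) (auto dest: finite_subset)
  also have "\<dots> \<le> sum c F + real (card Sf) * r" using paths_cost(2) by simp
  also have "sum c F \<le> 2 * (sum c E0 + second_stage c U k ED + real (card Sr) * (T / real k))"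
    using forest(2) steiner_opt_le_robust[OF \<open>Sr \<subseteq> U\<close>] by simp
  finally show ?thesis by simp
qed

lemma run_terminals_cost:
  assumes inv: "run_invariant E c U b r Sr Sf W" and "0 \<le> r" "r \<le> 2 * b"
  shows "real (card W) * (r / 2) \<le> sum c E0 + second_stage c U k ED + real (card W) * (T / real k)"
proof -
  from inv have W: "finite W" "separated E c r W" "W \<subseteq> Domain Sr \<union> Range Sr" and "Sr \<subseteq> U"
    and far: "\<forall>(s, t)\<in>Sr. ereal b < dist E c {} s t"
    unfolding run_invariant_def by auto
  have "\<forall>(s, t)\<in>Sr. ereal (r / 2) \<le> dist E c {} s t"
  proof (intro ballI, clarify)
    fix s t assume "(s, t) \<in> Sr"
    then have "ereal b < dist E c {} s t" using far by blast
    moreover have "ereal (r / 2) \<le> ereal b" using assms(3) by simp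
    ultimately show "ereal (r / 2) \<le> dist E c {} s t" by (meson less_imp_le order_trans)
  qed
  moreover have "0 \<le> r / 2" "separated E c (2 * (r / 2)) W" using assms(2) W(2) by simp_all
  ultimately show ?thesis
    using separated_endpoints_cost[OF _ W(1) _ \<open>Sr \<subseteq> U\<close> W(3)] by blast
qed

end

lemma competitive_ratio_arith:
  fixes A tau g :: real and nr nf nw :: nat
  assumes "2 < g" "0 \<le> A" "0 \<le> tau" "nf + nw \<le> 2 * nr" "tau = 0 \<or> nr \<le> nw"
    and "real nw * tau * (g - 2) \<le> 2 * A"
  shows "2 * A + 2 * (real nr * tau) + g * (real nf * tau) \<le> 4 * g / (g - 2) * A"
proof -
  let ?x = "real nw * tau" and ?y = "real nr * tau" and ?z = "real nf * tau"
  have "?y \<le> ?x" using assms(3,5) by (auto intro: mult_right_mono)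
  then have "(1 + g) * ?y \<le> (1 + g) * ?x" using assms(1) by (intro mult_left_mono) auto
  moreover have "real (nf + nw) * tau \<le> real (2 * nr) * tau"
    using assms(3,4) by (intro mult_right_mono) auto
  then have "g * ?z \<le> g * (2 * ?y - ?x)" using assms(1) by (intro mult_left_mono) (auto simp: algebra_simps)
  ultimately have "2 * ?y + g * ?z \<le> (2 + g) * ?x" unfolding ring_distribs by linarith
  also have "\<dots> \<le> (2 + g) * (2 * A) / (g - 2)"
    using assms(1,6) by (simp add: pos_le_divide_eq mult.assoc mult_left_mono)
  finally have "2 * A + 2 * ?y + g * ?z \<le> 2 * A + (2 + g) * (2 * A) / (g - 2)" by simp
  also have "\<dots> = 4 * g / (g - 2) * A" using assms(1) by (simp add: field_simps)
  finally show ?thesis .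
qed

theorem mainTheorem16:
  fixes V :: "'v set" and E :: "'v set set" and c :: "'v set \<Rightarrow> real"
    and U :: "('v \<times> 'v) set" and lam T beta gamma :: real and k :: nat
    and E0 :: "'v set set" and ED :: "('v \<times> 'v) set \<Rightarrow> 'v set set"
    and Sr Sf :: "('v \<times> 'v) set" and W :: "'v set"
    and F :: "'v set set" and P :: "'v \<times> 'v \<Rightarrow> 'v list"
  assumes "graph V E" and "\<forall>e\<in>E. c e \<ge> 0"
    and "U \<subseteq> V \<times> V" and "lam \<ge> 1" and "k \<ge> 1" and "k \<le> card U"
    and "T \<ge> 0" and "2 < gamma" and "gamma \<le> beta / 2"
    and opt: "robust_optimal E c U k lam E0 ED"
    and run: "proc_final E c U (beta * T / real k) (gamma * T / real k) (Sr, Sf, W)"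
    and forest: "steiner_forest E Sr F" "sum c F \<le> 2 * steiner_opt E c Sr"
    and paths: "\<forall>p\<in>Sf. shortest_path E c (fst p) (snd p) (P p)"
    and "T \<ge> second_stage c U k ED"
  shows "sum c (F \<union> (\<Union>p\<in>Sf. path_edges (P p)))
           \<le> 4 * gamma / (gamma - 2) * (sum c E0 + second_stage c U k ED)"
proof -
  define tau where "tau = T / real k"
  let ?A = "sum c E0 + second_stage c U k ED"
  have tau: "0 \<le> tau" using assms(5,7) by (simp add: tau_def)
  have "(2 * gamma) * tau \<le> beta * tau" using tau assms(9) by (intro mult_right_mono) auto
  then have r: "0 \<le> gamma * tau" "2 * (gamma * tau) \<le> beta * tau" using tau assms(8) by simp_all
  then have r': "gamma * tau \<le> 2 * (beta * tau)" by linarith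
  have feasible: "robust_feasible E U k E0 ED" using opt unfolding robust_optimal_def by blast
  have "finite U" using assms(1,3) unfolding graph_def by (meson finite_SigmaI finite_subset)
  note setting = assms(1,2) feasible this assms(5,6,15)
  have inv: "run_invariant E c U (beta * tau) (gamma * tau) Sr Sf W"
    using run_invariant_reachable[OF assms(2) r(1,2)] run unfolding proc_final_def tau_def by simp
  have upper: "sum c (F \<union> (\<Union>p\<in>Sf. path_edges (P p)))
      \<le> 2 * ?A + 2 * (real (card Sr) * tau) + gamma * (real (card Sf) * tau)"
    using run_output_cost[OF setting inv forest paths] by (simp add: tau_def algebra_simps)
  from run_terminals_cost[OF setting inv r(1) r']
  have "real (card W) * (gamma * tau / 2) \<le> ?A + real (card W) * tau" unfolding tau_def .
  then have lower: "real (card W) * tau * (gamma - 2) \<le> 2 * ?A" by (simp add: algebra_simps)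
  have "tau = 0 \<or> 0 < gamma * tau" using tau assms(8) by (cases "tau = 0") auto
  then have counts: "card Sf + card W \<le> 2 * card Sr" "tau = 0 \<or> card Sr \<le> card W"
    using run_invariant_card[OF inv] by auto
  have "0 \<le> ?A"
    using first_stage_cost_nonneg[OF setting(1-3)] second_stage_nonneg[OF setting(4,6,3,2)] by simp
  from competitive_ratio_arith[OF assms(8) this tau counts lower] show ?thesis using upper by simp
qed

end
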